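(* Let $C$ be a convex cone in $\mathbb{R}^n$ (usual topology) and $f:C\to\mathbb{R}$ a non-negative function that is positively homogeneous of degree $\alpha>0$. If $f$ is sub-convex, then $f$ is continuous on $\mathrm{ri}(C)$.
   Context: A cone is a subset $C$ with $\lambda C\subseteq C$ for all $\lambda>0$. $f$ is positively homogeneous of degree $\alpha$ if $f(\lambda x)=\lambda^{\alpha}f(x)$ for $x\in C$, $\lambda>0$. $f$ is sub-convex if every sublevel set $S_r(f)=\{x\in C: f(x)\le r\}$, $r\in\mathbb{R}$, is convex. $\mathrm{ri}(C)$ is the interior of $C$ relative to its affine hull. *)

theory Defs
  imports "HOL-Analysis.Analysis"
begin

definition pos_cone :: "'a::real_vector set \<Rightarrow> bool" where
  "pos_cone C \<longleftrightarrow> (\<forall>c::real. c > 0 \<longrightarrow> (\<forall>x\<in>C. c *\<^sub>R x \<in> C))"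

definition pos_homogeneous_on :: "'a::real_vector set \<Rightarrow> real \<Rightarrow> ('a \<Rightarrow> real) \<Rightarrow> bool" where
  "pos_homogeneous_on C \<alpha> f \<longleftrightarrow>
     (\<forall>x\<in>C. \<forall>c::real. c > 0 \<longrightarrow> f (c *\<^sub>R x) = c powr \<alpha> * f x)"

definition sublevel :: "'a set \<Rightarrow> ('a \<Rightarrow> real) \<Rightarrow> real \<Rightarrow> 'a set" where
  "sublevel C f r = {x\<in>C. f x \<le> r}"

definition sub_convex_on :: "'a::real_vector set \<Rightarrow> ('a \<Rightarrow> real) \<Rightarrow> bool" where
  "sub_convex_on C f \<longleftrightarrow> (\<forall>r::real. convex (sublevel C f r))"

end

theory Submission
  imports Defs
begin

text \<open>The function g = f powr (1/\<alpha>) is non-negative, positively homogeneous of degree 1, and its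
  sublevel sets are those of f, so its unit sublevel set is convex. A standard gauge argument then
  makes g subadditive and hence convex on the cone. Convex functions on finite-dimensional spaces
  are continuous on the relative interior of their domain, and f = g powr \<alpha> inherits this.\<close>

lemma affine_retraction:
  fixes A :: "'a::euclidean_space set"
  assumes "affine A" and "a \<in> A"
  obtains r where "continuous_on UNIV r" and "\<And>x. r x \<in> A" and "\<And>x. x \<in> A \<Longrightarrow> r x = x"
    and "\<And>t x y. r ((1 - t) *\<^sub>R x + t *\<^sub>R y) = (1 - t) *\<^sub>R r x + t *\<^sub>R r y"
proof -
  let ?L = "(\<lambda>x. x - a) ` A"
  have "\<exists>P. range P \<subseteq> ?L \<and> linear P \<and> (\<forall>v\<in>?L. P (id v) = v)"
    by (rule linear_exists_left_inverse_on)
      (use affine_diffs_subspace_subtract[OF assms] in \<open>auto simp: linear_iff\<close>)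
  then obtain P where P: "linear P" "range P \<subseteq> ?L" "\<And>v. v \<in> ?L \<Longrightarrow> P v = v"
    by auto
  define r where "r x = a + P (x - a)" for x
  have "bounded_linear P"
    using P(1) by (simp add: linear_conv_bounded_linear)
  then have "continuous_on UNIV r"
    unfolding r_def
    by (intro continuous_on_add continuous_on_const continuous_on_diff continuous_on_id
        bounded_linear.continuous_on[OF \<open>bounded_linear P\<close>])
  moreover have "r x \<in> A" for x
  proof -
    obtain y where "y \<in> A" "P (x - a) = y - a"
      using P(2) by blast
    then show ?thesis
      by (simp add: r_def)
  qed
  moreover have "r x = x" if "x \<in> A" for x
    using P(3)[of "x - a"] that by (simp add: r_def)
  moreover have "r ((1 - t) *\<^sub>R x + t *\<^sub>R y) = (1 - t) *\<^sub>R r x + t *\<^sub>R r y" for t x y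
  proof -
    have "(1 - t) *\<^sub>R x + t *\<^sub>R y - a = (1 - t) *\<^sub>R (x - a) + t *\<^sub>R (y - a)"
      by (simp add: algebra_simps)
    then have "r ((1 - t) *\<^sub>R x + t *\<^sub>R y) = a + (1 - t) *\<^sub>R P (x - a) + t *\<^sub>R P (y - a)"
      using P(1) by (simp add: r_def linear_add linear_scale)
    then show ?thesis
      by (simp add: r_def algebra_simps)
  qed
  ultimately show ?thesis
    using that by blast
qed

text \<open>Extend the convex function from its relative interior to an open set by composing with an
  affine retraction onto the affine hull, and apply the full-dimensional result.\<close>
lemma convex_on_continuous_rel_interior:
  fixes g :: "'a::euclidean_space \<Rightarrow> real"
  assumes "convex_on C g"
  shows "continuous_on (rel_interior C) g"
proof (cases "C = {}")
  case False
  then obtain a where "a \<in> C" by auto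
  then obtain r where r: "continuous_on UNIV r" "\<And>x. r x \<in> affine hull C"
    "\<And>x. x \<in> affine hull C \<Longrightarrow> r x = x"
    "\<And>t x y. r ((1 - t) *\<^sub>R x + t *\<^sub>R y) = (1 - t) *\<^sub>R r x + t *\<^sub>R r y"
    using affine_retraction[of "affine hull C" a] by (auto intro: hull_inc)
  obtain U where U: "open U" "rel_interior C = U \<inter> affine hull C"
    using openin_rel_interior[of C] unfolding openin_open by auto
  define S where "S = r -` rel_interior C"
  have "open S"
    using U r(1,2) open_vimage[OF U(1) r(1)] by (simp add: S_def vimage_def)
  have "convex S"
    using convex_rel_interior[OF convex_on_imp_convex[OF assms]]
    by (auto simp: S_def convex_alt r(4))
  have "convex_on S (g \<circ> r)"
  proof (rule convex_onI[OF _ \<open>convex S\<close>])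
    fix t :: real and x y assume "0 < t" "t < 1" "x \<in> S" "y \<in> S"
    then show "(g \<circ> r) ((1 - t) *\<^sub>R x + t *\<^sub>R y) \<le> (1 - t) * (g \<circ> r) x + t * (g \<circ> r) y"
      using convex_onD[OF assms, of t "r x" "r y"] rel_interior_subset
      by (auto simp: S_def r(4))
  qed
  then have "continuous_on S (g \<circ> r)"
    by (rule convex_on_continuous[OF \<open>open S\<close>])
  moreover have "rel_interior C \<subseteq> S" and "\<And>x. x \<in> rel_interior C \<Longrightarrow> (g \<circ> r) x = g x"
    using U(2) r(3) by (auto simp: S_def)
  ultimately show ?thesis
    using continuous_on_subset continuous_on_cong by metis
qed simp

lemma powr_le_powr_iff:
  fixes x y a :: real
  assumes "a > 0" "x \<ge> 0" "y \<ge> 0"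
  shows "x powr a \<le> y powr a \<longleftrightarrow> x \<le> y"
  using assms by (meson less_imp_le not_le powr_less_mono2 powr_mono2)

lemma pos_homogeneous_on_powr:
  assumes "pos_homogeneous_on C \<alpha> f" and "\<forall>x\<in>C. f x \<ge> 0"
  shows "pos_homogeneous_on C (\<alpha> * \<beta>) (\<lambda>x. f x powr \<beta>)"
  unfolding pos_homogeneous_on_def
proof (intro ballI allI impI)
  fix x and c :: real
  assume "x \<in> C" "c > 0"
  then have "f (c *\<^sub>R x) powr \<beta> = (c powr \<alpha>) powr \<beta> * f x powr \<beta>"
    using assms by (simp add: pos_homogeneous_on_def powr_mult)
  then show "f (c *\<^sub>R x) powr \<beta> = c powr (\<alpha> * \<beta>) * f x powr \<beta>"
    by (simp add: powr_powr)
qed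

lemma sublevel_powr:
  assumes "\<forall>x\<in>C. f x \<ge> 0" and "\<beta> > 0" and "r \<ge> 0"
  shows "sublevel C (\<lambda>x. f x powr \<beta>) r = sublevel C f (r powr (1 / \<beta>))"
proof -
  have "f x powr \<beta> \<le> r \<longleftrightarrow> f x \<le> r powr (1 / \<beta>)" if "x \<in> C" for x
  proof -
    have "r = (r powr (1 / \<beta>)) powr \<beta>"
      using assms by (simp add: powr_powr)
    then show ?thesis
      using assms that powr_le_powr_iff[of \<beta> "f x" "r powr (1 / \<beta>)"] by simp
  qed
  then show ?thesis
    by (auto simp: sublevel_def)
qed

lemma sub_convex_on_powr:
  assumes "sub_convex_on C f" and "\<forall>x\<in>C. f x \<ge> 0" and "\<beta> > 0"
  shows "sub_convex_on C (\<lambda>x. f x powr \<beta>)"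
  unfolding sub_convex_on_def
proof
  fix r :: real
  show "convex (sublevel C (\<lambda>x. f x powr \<beta>) r)"
  proof (cases "r \<ge> 0")
    case True
    then show ?thesis
      using assms by (simp add: sublevel_powr sub_convex_on_def)
  next
    case False
    then have "sublevel C (\<lambda>x. f x powr \<beta>) r = {}"
      by (auto simp: sublevel_def dest: order_trans[OF powr_ge_zero])
    then show ?thesis
      by simp
  qed
qed

lemma pos_cone_add:
  assumes "pos_cone C" and "convex C" and "x \<in> C" and "y \<in> C"
  shows "x + y \<in> C"
proof -
  have "(1/2) *\<^sub>R x + (1/2) *\<^sub>R y \<in> C"
    using assms by (intro convexD) auto
  then have "2 *\<^sub>R ((1/2) *\<^sub>R x + (1/2) *\<^sub>R y) \<in> C"
    using assms(1) unfolding pos_cone_def by (metis zero_less_numeral)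
  then show ?thesis
    by (simp add: algebra_simps)
qed

text \<open>The classical gauge argument: x/(g x + \<epsilon>) and y/(g y + \<epsilon>) lie in the convex unit
  sublevel set, and (x + y)/(g x + g y + 2\<epsilon>) is a convex combination of them.\<close>
lemma pos_homogeneous_subadditive:
  assumes cone: "pos_cone C" and "convex C" and nonneg: "\<forall>x\<in>C. g x \<ge> 0"
    and hom: "pos_homogeneous_on C 1 g" and unit: "convex (sublevel C g 1)"
    and x: "x \<in> C" and y: "y \<in> C"
  shows "g (x + y) \<le> g x + g y"
proof (rule field_le_epsilon)
  fix e :: real
  assume "e > 0"
  define A where "A = g x + e/2"
  define B where "B = g y + e/2"
  have "A > 0" "B > 0"
    using nonneg x y \<open>e > 0\<close> by (auto simp: A_def B_def)
  have scale: "z \<in> C \<Longrightarrow> c > 0 \<Longrightarrow> c *\<^sub>R z \<in> C \<and> g (c *\<^sub>R z) = c * g z" for z c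
    using cone hom by (simp add: pos_cone_def pos_homogeneous_on_def)
  have "(1/A) *\<^sub>R x \<in> sublevel C g 1" "(1/B) *\<^sub>R y \<in> sublevel C g 1"
    using scale[OF x, of "1/A"] scale[OF y, of "1/B"] \<open>A > 0\<close> \<open>B > 0\<close> \<open>e > 0\<close>
    by (auto simp: sublevel_def A_def B_def)
  moreover have "A/(A+B) + B/(A+B) = 1"
    using \<open>A > 0\<close> \<open>B > 0\<close> by (simp add: add_divide_distrib[symmetric])
  ultimately have "(A/(A+B)) *\<^sub>R ((1/A) *\<^sub>R x) + (B/(A+B)) *\<^sub>R ((1/B) *\<^sub>R y) \<in> sublevel C g 1"
    using unit \<open>A > 0\<close> \<open>B > 0\<close> by (intro convexD) auto
  moreover have "(A/(A+B)) *\<^sub>R ((1/A) *\<^sub>R x) + (B/(A+B)) *\<^sub>R ((1/B) *\<^sub>R y) = (1/(A+B)) *\<^sub>R (x + y)"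
    using \<open>A > 0\<close> \<open>B > 0\<close> by (simp add: algebra_simps)
  ultimately have "g (x + y) / (A + B) \<le> 1"
    using scale[OF pos_cone_add[OF cone \<open>convex C\<close> x y], of "1/(A+B)"] \<open>A > 0\<close> \<open>B > 0\<close>
    by (simp add: sublevel_def)
  then show "g (x + y) \<le> g x + g y + e"
    using \<open>A > 0\<close> \<open>B > 0\<close> by (simp add: A_def B_def field_simps)
qed

lemma pos_homogeneous_convex_on:
  assumes cone: "pos_cone C" and "convex C" and "\<forall>x\<in>C. g x \<ge> 0"
    and hom: "pos_homogeneous_on C 1 g" and "convex (sublevel C g 1)"
  shows "convex_on C g"
proof (rule convex_onI[OF _ \<open>convex C\<close>])
  fix t :: real and x y
  assume t: "0 < t" "t < 1" and xy: "x \<in> C" "y \<in> C"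
  then have "(1 - t) *\<^sub>R x \<in> C" "t *\<^sub>R y \<in> C"
    using cone by (auto simp: pos_cone_def)
  then have "g ((1 - t) *\<^sub>R x + t *\<^sub>R y) \<le> g ((1 - t) *\<^sub>R x) + g (t *\<^sub>R y)"
    using assms by (intro pos_homogeneous_subadditive)
  also have "\<dots> = (1 - t) * g x + t * g y"
    using hom xy t by (simp add: pos_homogeneous_on_def)
  finally show "g ((1 - t) *\<^sub>R x + t *\<^sub>R y) \<le> (1 - t) * g x + t * g y" .
qed

theorem mainTheorem8:
  fixes C :: "(real ^ 'n) set" and f :: "real ^ 'n \<Rightarrow> real" and \<alpha> :: real
  assumes "pos_cone C" and "convex C"
    and "\<forall>x\<in>C. f x \<ge> 0"
    and "\<alpha> > 0"
    and "pos_homogeneous_on C \<alpha> f"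
    and "sub_convex_on C f"
  shows "continuous_on (rel_interior C) f"
proof -
  define g where "g = (\<lambda>x. f x powr (1 / \<alpha>))"
  have "pos_homogeneous_on C 1 g"
    using pos_homogeneous_on_powr[OF assms(5,3), of "1 / \<alpha>"] \<open>\<alpha> > 0\<close> by (simp add: g_def)
  moreover have "convex (sublevel C g 1)"
    using sub_convex_on_powr[OF assms(6,3), of "1 / \<alpha>"] \<open>\<alpha> > 0\<close>
    by (simp add: g_def sub_convex_on_def)
  ultimately have "convex_on C g"
    using assms(1-3) by (intro pos_homogeneous_convex_on) (auto simp: g_def)
  then have "continuous_on (rel_interior C) (\<lambda>x. g x powr \<alpha>)"
    by (intro continuous_on_powr' convex_on_continuous_rel_interior continuous_on_const)
      (use \<open>\<alpha> > 0\<close> in \<open>auto simp: g_def\<close>)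
  moreover have "g x powr \<alpha> = f x" if "x \<in> rel_interior C" for x
    using that rel_interior_subset assms(3,4) by (force simp: g_def powr_powr)
  ultimately show ?thesis
    using continuous_on_cong by force
qed

end
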